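(* There is an absolute constant $C>0$ such that the following holds. Let $G=(n,s,\{u^p_i\})$ be an anonymous game with $n\ge 2$ players and $s\ge 2$ strategies, with utilities in $[0,1]$, and let $\lambda>0$ be such that $|u^p_i(x)-u^p_i(y)|\le \lambda\|x-y\|_1$ for all $p\in[n]$, $i\in[s]$ and $x,y\in\Pi^s_{n-1}$. Then $G$ has an $\epsilon$-approximate pure Nash equilibrium with $\epsilon = C s^2\lambda$.
   Context: An anonymous game $G=(n,s,\{u^p_i\})$ consists of players $[n]=\{1,\dots,n\}$, strategies $[s]=\{1,\dots,s\}$, and for each $p\in[n]$, $i\in[s]$ a utility function $u^p_i:\Pi^s_{n-1}\to[0,1]$, where $\Pi^s_{n-1}=\{(x_1,\dots,x_s)\in\mathbb{Z}_{\ge 0}^s:\sum_i x_i=n-1\}$; $u^p_i(x)$ is the utility of player $p$ playing strategy $i$ when, for each $\ell$, exactly $x_\ell$ of the other $n-1$ players play strategy $\ell$. A pure strategy profile is a map $S:[n]\to[s]$; for $p\in[n]$, $x[S,p]\in\Pi^s_{n-1}$ is the vector whose $\ell$-th entry is the number of $q\in[n]\setminus\{p\}$ with $S(q)=\ell$. $S$ is an $\epsilon$-approximate pure Nash equilibrium if for all $p\in[n]$ and all $i\in[s]$, $u^p_{S(p)}(x[S,p])+\epsilon\ge u^p_i(x[S,p])$. *)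

theory Defs
  imports "HOL-Analysis.Analysis"
begin

text \<open>Players are 1..n, strategies are 1..s. A count vector is a function
  nat => nat supported on {1..s}. u p i x is the utility of player p playing i.\<close>

definition Pi_set :: "nat \<Rightarrow> nat \<Rightarrow> (nat \<Rightarrow> nat) set" where
  "Pi_set s m = {x. (\<forall>i. i \<notin> {1..s} \<longrightarrow> x i = 0) \<and> (\<Sum>i=1..s. x i) = m}"

definition l1_dist :: "nat \<Rightarrow> (nat \<Rightarrow> nat) \<Rightarrow> (nat \<Rightarrow> nat) \<Rightarrow> real" where
  "l1_dist s x y = (\<Sum>i=1..s. \<bar>real (x i) - real (y i)\<bar>)"

definition anonymous_game ::
  "nat \<Rightarrow> nat \<Rightarrow> (nat \<Rightarrow> nat \<Rightarrow> (nat \<Rightarrow> nat) \<Rightarrow> real) \<Rightarrow> bool" where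
  "anonymous_game n s u \<longleftrightarrow>
     (\<forall>p\<in>{1..n}. \<forall>i\<in>{1..s}. \<forall>x\<in>Pi_set s (n - 1). 0 \<le> u p i x \<and> u p i x \<le> 1)"

definition lipschitz_game ::
  "nat \<Rightarrow> nat \<Rightarrow> (nat \<Rightarrow> nat \<Rightarrow> (nat \<Rightarrow> nat) \<Rightarrow> real) \<Rightarrow> real \<Rightarrow> bool" where
  "lipschitz_game n s u lambda \<longleftrightarrow>
     (\<forall>p\<in>{1..n}. \<forall>i\<in>{1..s}. \<forall>x\<in>Pi_set s (n - 1). \<forall>y\<in>Pi_set s (n - 1).
        \<bar>u p i x - u p i y\<bar> \<le> lambda * l1_dist s x y)"

definition pure_profile :: "nat \<Rightarrow> nat \<Rightarrow> (nat \<Rightarrow> nat) \<Rightarrow> bool" where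
  "pure_profile n s S \<longleftrightarrow> (\<forall>p\<in>{1..n}. S p \<in> {1..s})"

definition others_count :: "nat \<Rightarrow> nat \<Rightarrow> (nat \<Rightarrow> nat) \<Rightarrow> nat \<Rightarrow> (nat \<Rightarrow> nat)" where
  "others_count n s S p = (\<lambda>l. if l \<in> {1..s} then card {q \<in> {1..n} - {p}. S q = l} else 0)"

definition approx_pure_NE ::
  "nat \<Rightarrow> nat \<Rightarrow> (nat \<Rightarrow> nat \<Rightarrow> (nat \<Rightarrow> nat) \<Rightarrow> real) \<Rightarrow> real \<Rightarrow> (nat \<Rightarrow> nat) \<Rightarrow> bool" where
  "approx_pure_NE n s u \<epsilon> S \<longleftrightarrow> pure_profile n s S \<and>
     (\<forall>p\<in>{1..n}. \<forall>i\<in>{1..s}.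
        u p (S p) (others_count n s S p) + \<epsilon> \<ge> u p i (others_count n s S p))"

end

theory Submission
  imports Defs
begin

text \<open>Plan of the proof:
  \<^item> the utilities u p i, defined on integer count vectors, are extended to real count
    vectors by the McShane formula, keeping the Lipschitz constant lam;
  \<^item> every player replaces its best response by a smoothed best response, supported on the
    lam-best strategies and Lipschitz in the count vector;
  \<^item> the expected count vector of these responses is a Lipschitz self-map of a box, so by
    Kuhn's lemma (discrete Brouwer) it has an approximate fixed point x;
  \<^item> Hall's theorem with capacities rounds the mixed responses at x to a pure profile whose
    counts are within 3 s of x, in which every player is within (6 s + 3) lam of best.\<close>

text \<open>Each element p of a finite set N has a finite list
  A p of admissible items, and item j may be chosen at most c j times.\<close>
definition hall_cond :: "'a set \<Rightarrow> ('a \<Rightarrow> 'b set) \<Rightarrow> ('b \<Rightarrow> nat) \<Rightarrow> bool" where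
  "hall_cond N A c \<longleftrightarrow> (\<forall>T\<subseteq>N. card T \<le> sum c (\<Union>(A ` T)))"

lemma hall_cond_nonempty:
  assumes "hall_cond N A c" "p \<in> N"
  shows "A p \<noteq> {}"
proof
  assume "A p = {}"
  moreover have "card {p} \<le> sum c (\<Union>(A ` {p}))"
    using assms(1)[unfolded hall_cond_def, rule_format, of "{p}"] assms(2) by simp
  ultimately show False by simp
qed

lemma hall_cond_singletons:
  assumes "hall_cond N A c" "\<forall>p\<in>N. A p = {S p}"
  shows "card {p\<in>N. S p = j} \<le> c j"
proof -
  let ?T = "{p\<in>N. S p = j}"
  have "\<Union>(A ` ?T) \<subseteq> {j}" using assms(2) by auto
  then have "sum c (\<Union>(A ` ?T)) \<le> sum c {j}" by (intro sum_mono2) auto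
  moreover have "card ?T \<le> sum c (\<Union>(A ` ?T))"
    using assms(1)[unfolded hall_cond_def, rule_format, of ?T] by blast
  ultimately show ?thesis by simp
qed

lemma hall_violator_contains:
  assumes "hall_cond N A c" "T \<subseteq> N" "sum c (\<Union>((A(p := B)) ` T)) < card T"
  shows "p \<in> T"
proof (rule ccontr)
  assume "p \<notin> T"
  then have "(A(p := B)) ` T = A ` T" by auto
  moreover have "card T \<le> sum c (\<Union>(A ` T))"
    using assms(1)[unfolded hall_cond_def, rule_format, OF assms(2)] .
  ultimately show False using assms(3) by simp
qed

text \<open>Key step (Halmos--Vaughan): if a list has two items, one of them can be deleted
  without violating the Hall condition.  Otherwise two violating sets T1 and T2 would both
  contain p, and comparing card with the capacity of the covered items on their union and
  intersection gives a contradiction.\<close>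
lemma hall_cond_shrink:
  assumes fin: "finite N" "\<forall>q\<in>N. finite (A q)" and hall: "hall_cond N A c"
    and p: "p \<in> N" and j: "j1 \<in> A p" "j2 \<in> A p" "j1 \<noteq> j2"
  shows "hall_cond N (A(p := A p - {j1})) c \<or> hall_cond N (A(p := A p - {j2})) c"
proof (rule ccontr)
  define A1 where "A1 = A(p := A p - {j1})"
  define A2 where "A2 = A(p := A p - {j2})"
  assume "\<not> ?thesis"
  then have "\<exists>T1\<subseteq>N. sum c (\<Union>(A1 ` T1)) < card T1" "\<exists>T2\<subseteq>N. sum c (\<Union>(A2 ` T2)) < card T2"
    unfolding A1_def A2_def hall_cond_def by (simp_all add: not_le)
  then obtain T1 T2 where T: "T1 \<subseteq> N" "T2 \<subseteq> N"
    and viol1: "sum c (\<Union>(A1 ` T1)) < card T1" and viol2: "sum c (\<Union>(A2 ` T2)) < card T2"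
    by (elim exE conjE)
  have "p \<in> T1" using hall_violator_contains[OF hall T(1) viol1[unfolded A1_def]] .
  have "p \<in> T2" using hall_violator_contains[OF hall T(2) viol2[unfolded A2_def]] .
  define X1 where "X1 = \<Union>(A1 ` T1)"
  define X2 where "X2 = \<Union>(A2 ` T2)"
  have v1: "sum c X1 < card T1" and v2: "sum c X2 < card T2"
    using viol1 viol2 unfolding X1_def X2_def by simp_all
  have finT: "finite T1" "finite T2" using T fin(1) by (auto intro: finite_subset)
  have finX: "finite X1" "finite X2"
    unfolding X1_def X2_def A1_def A2_def using finT fin T by auto
  \<comment> \<open>The union of the violators is covered by X1 and X2 together, since j1 survives
    in A2 and j2 survives in A1; their common part minus p is covered by both.\<close>
  have "\<Union>(A ` (T1 \<union> T2)) \<subseteq> X1 \<union> X2"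
    unfolding X1_def X2_def A1_def A2_def using \<open>p \<in> T1\<close> \<open>p \<in> T2\<close> j(3) by auto
  then have "sum c (\<Union>(A ` (T1 \<union> T2))) \<le> sum c (X1 \<union> X2)"
    using finX by (intro sum_mono2) auto
  moreover have "card (T1 \<union> T2) \<le> sum c (\<Union>(A ` (T1 \<union> T2)))"
    using hall[unfolded hall_cond_def, rule_format, of "T1 \<union> T2"] T by blast
  ultimately have union: "card (T1 \<union> T2) \<le> sum c (X1 \<union> X2)" by linarith
  have "\<Union>(A ` (T1 \<inter> T2 - {p})) \<subseteq> X1 \<inter> X2"
    unfolding X1_def X2_def A1_def A2_def by auto
  then have "sum c (\<Union>(A ` (T1 \<inter> T2 - {p}))) \<le> sum c (X1 \<inter> X2)"
    using finX by (intro sum_mono2) auto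
  moreover have "card (T1 \<inter> T2 - {p}) \<le> sum c (\<Union>(A ` (T1 \<inter> T2 - {p})))"
    using hall[unfolded hall_cond_def, rule_format, of "T1 \<inter> T2 - {p}"] T by blast
  ultimately have inter: "card (T1 \<inter> T2 - {p}) \<le> sum c (X1 \<inter> X2)" by linarith
  have "card (T1 \<inter> T2 - {p}) + 1 = card (T1 \<inter> T2)"
    using card_Suc_Diff1[of "T1 \<inter> T2" p] \<open>p \<in> T1\<close> \<open>p \<in> T2\<close> finT by simp
  moreover have "card (T1 \<union> T2) + card (T1 \<inter> T2) = card T1 + card T2"
    using finT by (rule card_Un_Int[symmetric])
  moreover have "sum c (X1 \<union> X2) + sum c (X1 \<inter> X2) = sum c X1 + sum c X2"
    using finX by (rule sum.union_inter)
  ultimately show False using union inter v1 v2 by linarith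
qed

theorem hall_capacity:
  assumes "finite N" "\<forall>p\<in>N. finite (A p)" "hall_cond N A c"
  shows "\<exists>S. (\<forall>p\<in>N. S p \<in> A p) \<and> (\<forall>j. card {p\<in>N. S p = j} \<le> c j)"
  using assms
proof (induction "\<Sum>p\<in>N. card (A p)" arbitrary: A rule: less_induct)
  case less
  note fin = less.prems(1,2) and hall = less.prems(3)
  show ?case
  proof (cases "\<exists>p\<in>N. 2 \<le> card (A p)")
    case False
    define S where "S p = (THE j. A p = {j})" for p
    have single: "A p = {S p}" if "p \<in> N" for p
    proof -
      have "card (A p) \<noteq> 0" using hall_cond_nonempty[OF hall that] fin that by simp
      moreover have "\<not> 2 \<le> card (A p)" using False that by blast
      ultimately have "card (A p) = 1" by linarith
      then obtain j where "A p = {j}" by (rule card_1_singletonE)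
      then show ?thesis unfolding S_def by simp
    qed
    have "card {p\<in>N. S p = j} \<le> c j" for j
      by (rule hall_cond_singletons[OF hall]) (simp add: single)
    moreover have "S p \<in> A p" if "p \<in> N" for p
      using single[OF that] by simp
    ultimately show ?thesis by (intro exI[of _ S]) simp
  next
    case True
    then obtain p where p: "p \<in> N" "2 \<le> card (A p)" by (elim bexE)
    have "\<not> card (A p) \<le> Suc 0" using p(2) by simp
    then have "\<not> (\<forall>a\<in>A p. \<forall>b\<in>A p. a = b)"
      using card_le_Suc0_iff_eq[of "A p"] fin(2) p(1) by simp
    then obtain j1 j2 where j: "j1 \<in> A p" "j2 \<in> A p" "j1 \<noteq> j2" by auto
    obtain j where jp: "j \<in> A p" and hall': "hall_cond N (A(p := A p - {j})) c"
      using hall_cond_shrink[OF fin hall p(1) j] j(1,2) by (elim disjE) (rule that; assumption)+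
    let ?B = "A(p := A p - {j})"
    have smaller: "(\<Sum>q\<in>N. card (?B q)) < (\<Sum>q\<in>N. card (A q))"
    proof (rule sum_strict_mono_ex1[OF fin(1)])
      show "\<forall>q\<in>N. card (?B q) \<le> card (A q)" using fin by (simp add: card_mono)
      show "\<exists>q\<in>N. card (?B q) < card (A q)"
        using p jp fin by (intro bexI[of _ p]) (simp_all add: card_Diff1_less)
    qed
    have finB: "\<forall>q\<in>N. finite (?B q)" using fin by simp
    obtain S where S: "\<forall>q\<in>N. S q \<in> ?B q" "\<forall>j. card {q\<in>N. S q = j} \<le> c j"
      using less.hyps[OF smaller fin(1) finB hall'] by (elim exE conjE)
    have "S q \<in> A q" if "q \<in> N" for q
      using S(1) that by (cases "q = p") auto
    with S(2) show ?thesis by (intro exI[of _ S]) simp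
  qed
qed

definition dist1 :: "nat \<Rightarrow> (nat \<Rightarrow> real) \<Rightarrow> (nat \<Rightarrow> real) \<Rightarrow> real" where
  "dist1 s y z = (\<Sum>i=1..s. \<bar>y i - z i\<bar>)"

lemma dist1_nonneg: "0 \<le> dist1 s y z"
  unfolding dist1_def by (simp add: sum_nonneg)

lemma dist1_commute: "dist1 s y z = dist1 s z y"
  unfolding dist1_def by (simp add: abs_minus_commute)

lemma dist1_triangle: "dist1 s y z \<le> dist1 s y w + dist1 s w z"
  unfolding dist1_def sum.distrib[symmetric] by (intro sum_mono) linarith

lemma dist1_of_nat: "dist1 s (real \<circ> x) (real \<circ> y) = l1_dist s x y"
  unfolding dist1_def l1_dist_def by simp

lemma dist1_pointwise:
  assumes "\<And>i. i \<in> {1..s} \<Longrightarrow> \<bar>y i - z i\<bar> \<le> d"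
  shows "dist1 s y z \<le> real s * d"
proof -
  have "dist1 s y z \<le> (\<Sum>i=1..s. d)" unfolding dist1_def by (intro sum_mono assms)
  then show ?thesis by simp
qed

text \<open>McShane extension: a function f that is lam-Lipschitz on a set X of integer vectors
  extends to the lam-Lipschitz function y \<mapsto> inf_x (f x + lam |y - x|_1) on all real vectors.
  This lets us evaluate utilities at fractional (expected) strategy counts.\<close>
definition lip_ext :: "real \<Rightarrow> nat \<Rightarrow> (nat \<Rightarrow> nat) set \<Rightarrow> ((nat \<Rightarrow> nat) \<Rightarrow> real) \<Rightarrow> (nat \<Rightarrow> real) \<Rightarrow> real"
  where "lip_ext lam s X f y = (INF x\<in>X. f x + lam * dist1 s y (real \<circ> x))"

lemma lip_ext_le:
  assumes "bdd_below (f ` X)" "0 \<le> lam" "x \<in> X"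
  shows "lip_ext lam s X f y \<le> f x + lam * dist1 s y (real \<circ> x)"
proof -
  obtain b where b: "\<And>x. x \<in> X \<Longrightarrow> b \<le> f x" using assms(1) by (auto simp: bdd_below_def)
  have "b \<le> f x' + lam * dist1 s y (real \<circ> x')" if "x' \<in> X" for x'
    using b[OF that] assms(2) dist1_nonneg[of s y "real \<circ> x'"] by (simp add: add_increasing2)
  then have "bdd_below ((\<lambda>x. f x + lam * dist1 s y (real \<circ> x)) ` X)" by (rule bdd_belowI2)
  then show ?thesis unfolding lip_ext_def using assms(3) by (rule cINF_lower)
qed

lemma lip_ext_lipschitz_le:
  assumes "X \<noteq> {}" "bdd_below (f ` X)" "0 \<le> lam"
  shows "lip_ext lam s X f y \<le> lip_ext lam s X f y' + lam * dist1 s y y'"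
proof -
  have "lip_ext lam s X f y - lam * dist1 s y y' \<le> f x + lam * dist1 s y' (real \<circ> x)"
    if "x \<in> X" for x
  proof -
    have "lip_ext lam s X f y \<le> f x + lam * dist1 s y (real \<circ> x)"
      by (rule lip_ext_le[OF assms(2,3) that])
    also have "\<dots> \<le> f x + lam * (dist1 s y y' + dist1 s y' (real \<circ> x))"
      using dist1_triangle assms(3) by (simp add: mult_left_mono)
    finally show ?thesis by (simp add: algebra_simps)
  qed
  then have "lip_ext lam s X f y - lam * dist1 s y y' \<le> lip_ext lam s X f y'"
    unfolding lip_ext_def[of lam s X f y'] using assms(1) by (intro cINF_greatest)
  then show ?thesis by simp
qed

lemma lip_ext_lipschitz:
  assumes "X \<noteq> {}" "bdd_below (f ` X)" "0 \<le> lam"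
  shows "\<bar>lip_ext lam s X f y - lip_ext lam s X f y'\<bar> \<le> lam * dist1 s y y'"
  using lip_ext_lipschitz_le[OF assms, of s y y'] lip_ext_lipschitz_le[OF assms, of s y' y]
  by (simp add: dist1_commute abs_le_iff)

lemma lip_ext_extends:
  assumes "bdd_below (f ` X)" "0 \<le> lam" "x \<in> X"
    and lip: "\<And>x'. x' \<in> X \<Longrightarrow> \<bar>f x - f x'\<bar> \<le> lam * l1_dist s x x'"
  shows "lip_ext lam s X f (real \<circ> x) = f x"
proof (rule antisym)
  show "lip_ext lam s X f (real \<circ> x) \<le> f x"
    using lip_ext_le[OF assms(1-3), of s "real \<circ> x"] by (simp add: dist1_def)
  have "f x \<le> f x' + lam * dist1 s (real \<circ> x) (real \<circ> x')" if "x' \<in> X" for x'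
    using lip[OF that] by (simp add: dist1_of_nat)
  then show "f x \<le> lip_ext lam s X f (real \<circ> x)"
    unfolding lip_ext_def using assms(3) by (intro cINF_greatest) auto
qed

lemma ratio_lipschitz:
  fixes a a' b b' d e1 e2 :: real
  assumes "d \<le> b" "d \<le> b'" "0 < d" "0 \<le> a'" "a' \<le> b'" "\<bar>a - a'\<bar> \<le> e1" "\<bar>b - b'\<bar> \<le> e2"
  shows "\<bar>a / b - a' / b'\<bar> \<le> (e1 + e2) / d"
proof -
  have pos: "0 < b" "0 < b'" using assms by auto
  have "a / b - a' / b' = (a - a') / b + (a' / b') * ((b' - b) / b)"
    using pos by (simp add: field_simps)
  then have "\<bar>a / b - a' / b'\<bar> \<le> \<bar>(a - a') / b\<bar> + \<bar>(a' / b') * ((b' - b) / b)\<bar>"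
    by (simp only: abs_triangle_ineq)
  moreover have "\<bar>(a - a') / b\<bar> \<le> e1 / d"
    using pos assms by (simp add: abs_divide frac_le)
  moreover have "\<bar>(a' / b') * ((b' - b) / b)\<bar> \<le> 1 * (e2 / d)"
    unfolding abs_mult using pos assms
    by (intro mult_mono) (simp_all add: abs_divide frac_le abs_minus_commute)
  moreover have "(e1 + e2) / d = e1 / d + e2 / d" by (rule add_divide_distrib)
  ultimately show ?thesis by linarith
qed

lemma Max_image_lipschitz:
  fixes e e' :: "'a \<Rightarrow> real"
  assumes "finite I" "I \<noteq> {}" "\<And>k. k \<in> I \<Longrightarrow> \<bar>e k - e' k\<bar> \<le> d"
  shows "\<bar>Max (e ` I) - Max (e' ` I)\<bar> \<le> d"
proof -
  have one_side: "Max (f ` I) \<le> Max (g ` I) + d"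
    if "\<And>k. k \<in> I \<Longrightarrow> f k \<le> g k + d" for f g :: "'a \<Rightarrow> real"
  proof -
    have "Max (f ` I) \<in> f ` I" using assms(1,2) by (intro Max_in) auto
    then obtain k where k: "k \<in> I" "Max (f ` I) = f k" by auto
    have "g k \<le> Max (g ` I)" using k(1) assms(1) by simp
    then show ?thesis using k that[OF k(1)] by simp
  qed
  have "Max (e ` I) \<le> Max (e' ` I) + d" "Max (e' ` I) \<le> Max (e ` I) + d"
    using assms(3) by (intro one_side; fastforce simp: abs_le_iff)+
  then show ?thesis by (simp add: abs_le_iff)
qed

text \<open>Only lam-best strategies get positive weight,
  the weights form a probability vector, and unlike an exact best response they depend
  Lipschitz-continuously on e, which is what the fixed-point argument needs.\<close>
definition br_slack :: "nat \<Rightarrow> real \<Rightarrow> (nat \<Rightarrow> real) \<Rightarrow> nat \<Rightarrow> real" where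
  "br_slack s lam e j = max 0 (e j - Max (e ` {1..s}) + lam)"

definition soft_br :: "nat \<Rightarrow> real \<Rightarrow> (nat \<Rightarrow> real) \<Rightarrow> nat \<Rightarrow> real" where
  "soft_br s lam e j = br_slack s lam e j / (\<Sum>k=1..s. br_slack s lam e k)"

lemma br_slack_nonneg: "0 \<le> br_slack s lam e j"
  unfolding br_slack_def by simp

lemma br_slack_le_total:
  "j \<in> {1..s} \<Longrightarrow> br_slack s lam e j \<le> (\<Sum>k=1..s. br_slack s lam e k)"
  by (rule member_le_sum) (simp_all add: br_slack_nonneg)

text \<open>A best strategy has slack lam, so the normalising total is at least lam.\<close>
lemma br_slack_total_ge:
  assumes "1 \<le> s" "0 \<le> lam"
  shows "lam \<le> (\<Sum>k=1..s. br_slack s lam e k)"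
proof -
  have "Max (e ` {1..s}) \<in> e ` {1..s}" using assms(1) by (intro Max_in) auto
  then obtain k where k: "k \<in> {1..s}" "e k = Max (e ` {1..s})" by auto
  then have "br_slack s lam e k = lam" using assms(2) unfolding br_slack_def by simp
  with br_slack_le_total[OF k(1), of lam e] show ?thesis by simp
qed

text \<open>Slacks move by at most twice the payoff perturbation (once via e j, once via max e).\<close>
lemma br_slack_lipschitz:
  assumes "1 \<le> s" "\<And>k. k \<in> {1..s} \<Longrightarrow> \<bar>e k - e' k\<bar> \<le> d" "j \<in> {1..s}"
  shows "\<bar>br_slack s lam e j - br_slack s lam e' j\<bar> \<le> 2 * d"
proof -
  have "\<bar>Max (e ` {1..s}) - Max (e' ` {1..s})\<bar> \<le> d"
    using assms(1,2) by (intro Max_image_lipschitz) auto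
  then show ?thesis using assms(2)[OF assms(3)] unfolding br_slack_def max_def
    by (auto simp: abs_le_iff)
qed

lemma soft_br_nonneg: "0 \<le> soft_br s lam e j"
  unfolding soft_br_def by (simp add: br_slack_nonneg sum_nonneg)

lemma soft_br_sum:
  assumes "1 \<le> s" "0 < lam"
  shows "(\<Sum>j=1..s. soft_br s lam e j) = 1"
  using br_slack_total_ge[OF assms(1), of lam e] assms(2)
  unfolding soft_br_def sum_divide_distrib[symmetric] by simp

lemma soft_br_near_best:
  assumes "0 < soft_br s lam e j" "k \<in> {1..s}"
  shows "e k < e j + lam"
proof -
  have "0 < br_slack s lam e j"
    using assms(1) br_slack_nonneg[of s lam e j] unfolding soft_br_def
    by (cases "br_slack s lam e j = 0") auto
  moreover have "e k \<le> Max (e ` {1..s})" using assms(2) by simp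
  ultimately show ?thesis unfolding br_slack_def by linarith
qed

lemma soft_br_lipschitz:
  assumes "1 \<le> s" "0 < lam" "\<And>k. k \<in> {1..s} \<Longrightarrow> \<bar>e k - e' k\<bar> \<le> d" "j \<in> {1..s}"
  shows "\<bar>soft_br s lam e j - soft_br s lam e' j\<bar> \<le> 2 * (real s + 1) * d / lam"
proof -
  have "\<bar>(\<Sum>k=1..s. br_slack s lam e k) - (\<Sum>k=1..s. br_slack s lam e' k)\<bar>
        \<le> (\<Sum>k=1..s. \<bar>br_slack s lam e k - br_slack s lam e' k\<bar>)"
    unfolding sum_subtractf[symmetric] by (rule sum_abs)
  also have "\<dots> \<le> (\<Sum>k=1..s. 2 * d)"
    by (intro sum_mono br_slack_lipschitz[OF assms(1,3)])
  finally have total: "\<bar>(\<Sum>k=1..s. br_slack s lam e k) - (\<Sum>k=1..s. br_slack s lam e' k)\<bar>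
      \<le> real s * (2 * d)" by simp
  have "\<bar>soft_br s lam e j - soft_br s lam e' j\<bar> \<le> (2 * d + real s * (2 * d)) / lam"
    unfolding soft_br_def using assms(2)
    by (intro ratio_lipschitz br_slack_total_ge br_slack_nonneg br_slack_le_total
        br_slack_lipschitz total assms) auto
  then show ?thesis by (simp add: algebra_simps)
qed

text \<open>Approximate fixed points via Kuhn's lemma (the combinatorial core of Brouwer's theorem
  in the library).  Integer vectors c, indexed from 0, are read as the grid points c/K,
  indexed from 1.\<close>
definition grid_point :: "nat \<Rightarrow> (nat \<Rightarrow> nat) \<Rightarrow> nat \<Rightarrow> real" where
  "grid_point K c = (\<lambda>i. real (c (i - 1)) / real K)"

lemma grid_point_cell_dist:
  assumes "\<forall>j<s. q j \<le> r j \<and> r j \<le> q j + 1"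
  shows "dist1 s (grid_point K r) (grid_point K q) \<le> real s / real K"
proof -
  have "\<bar>grid_point K r i - grid_point K q i\<bar> \<le> 1 / real K" if "i \<in> {1..s}" for i
  proof -
    have "i - 1 < s" using that by auto
    then have "q (i - 1) \<le> r (i - 1)" "r (i - 1) \<le> q (i - 1) + 1" using assms by auto
    then have "\<bar>real (r (i - 1)) - real (q (i - 1))\<bar> \<le> 1" by (simp add: abs_le_iff)
    then show ?thesis unfolding grid_point_def diff_divide_distrib[symmetric] abs_divide
      by (simp add: divide_right_mono)
  qed
  then have "dist1 s (grid_point K r) (grid_point K q) \<le> real s * (1 / real K)"
    by (rule dist1_pointwise)
  then show ?thesis by simp
qed

definition fixpoint_label ::
  "nat \<Rightarrow> nat \<Rightarrow> (nat \<Rightarrow> (nat \<Rightarrow> real) \<Rightarrow> real) \<Rightarrow> (nat \<Rightarrow> nat) \<Rightarrow> nat \<Rightarrow> nat" where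
  "fixpoint_label K P F c i =
     (if c i < P \<and> real (c i) \<le> real K * F (Suc i) (grid_point K c) then 0 else 1)"

lemma fixpoint_label_bracket:
  assumes r: "\<forall>j<s. q j \<le> r j \<and> r j \<le> q j + 1" and t: "\<forall>j<s. q j \<le> t j \<and> t j \<le> q j + 1"
    and differ: "fixpoint_label K P F r i \<noteq> fixpoint_label K P F t i"
    and i: "i < s" and bound: "\<And>y. real K * F (Suc i) y \<le> real P"
  shows "\<exists>a\<in>{r, t}. \<exists>b\<in>{r, t}. real (q i) \<le> real K * F (Suc i) (grid_point K a) \<and>
           real K * F (Suc i) (grid_point K b) \<le> real (q i + 1)"
proof -
  have cell: "q i \<le> c i \<and> c i \<le> q i + 1" if "c \<in> {r, t}" for c
    using r t i that by auto
  have lower: "real (q i) \<le> real K * F (Suc i) (grid_point K c)"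
    if "c \<in> {r, t}" "fixpoint_label K P F c i = 0" for c
    using cell[OF that(1)] that(2) unfolding fixpoint_label_def
    by (simp split: if_splits)
  have upper: "real K * F (Suc i) (grid_point K c) \<le> real (q i + 1)"
    if "c \<in> {r, t}" "fixpoint_label K P F c i = 1" for c
  proof -
    have "real K * F (Suc i) (grid_point K c) \<le> real (c i)"
      using that(2) bound[of "grid_point K c"] unfolding fixpoint_label_def
      by (simp split: if_splits) linarith
    then show ?thesis using cell[OF that(1)] by linarith
  qed
  have binary: "fixpoint_label K P F c i = 0 \<or> fixpoint_label K P F c i = 1" for c
    by (simp add: fixpoint_label_def)
  show ?thesis
  proof (cases "fixpoint_label K P F r i = 0")
    case True
    then have "fixpoint_label K P F t i = 1" using differ binary[of t] by auto
    with True show ?thesis using lower upper by blast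
  next
    case False
    then have "fixpoint_label K P F r i = 1" "fixpoint_label K P F t i = 0"
      using differ binary[of r] binary[of t] by auto
    then show ?thesis using lower upper by blast
  qed
qed

text \<open>On a grid of mesh 1/K covering the range of a Lipschitz map F, Kuhn's lemma gives a
  unit cell that is completely labelled in every coordinate; the Lipschitz bound transfers
  the two one-sided estimates to its base vertex q.\<close>
lemma grid_approx_fixpoint:
  fixes F :: "nat \<Rightarrow> (nat \<Rightarrow> real) \<Rightarrow> real"
  assumes "0 < K" "0 < P"
    and range: "\<And>j y. j \<in> {1..s} \<Longrightarrow> 0 \<le> F j y \<and> real K * F j y \<le> real P"
    and lip: "\<And>j y y'. j \<in> {1..s} \<Longrightarrow> \<bar>F j y - F j y'\<bar> \<le> L * dist1 s y y'"
    and "0 \<le> L"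
  shows "\<exists>q. \<forall>j\<in>{1..s}. \<bar>F j (grid_point K q) - grid_point K q j\<bar> \<le> (L * real s + 1) / real K"
proof -
  let ?lab = "fixpoint_label K P F"
  have labels01: "\<forall>c. (\<forall>i<s. c i \<le> P) \<longrightarrow> (\<forall>i<s. ?lab c i = 0 \<or> ?lab c i = 1)"
    by (simp add: fixpoint_label_def)
  have labels_low: "\<forall>c. (\<forall>i<s. c i \<le> P) \<longrightarrow> (\<forall>i<s. c i = 0 \<longrightarrow> ?lab c i = 0)"
    using range assms(1,2) by (simp add: fixpoint_label_def)
  have labels_high: "\<forall>c. (\<forall>i<s. c i \<le> P) \<longrightarrow> (\<forall>i<s. c i = P \<longrightarrow> ?lab c i = 1)"
    by (simp add: fixpoint_label_def)
  obtain q where "\<forall>i<s. q i < P" and cell: "\<forall>i<s. \<exists>r t. (\<forall>j<s. q j \<le> r j \<and> r j \<le> q j + 1) \<and>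
      (\<forall>j<s. q j \<le> t j \<and> t j \<le> q j + 1) \<and> ?lab r i \<noteq> ?lab t i"
    by (rule kuhn_lemma[OF assms(2) labels01 labels_low labels_high])
  have "\<bar>F j (grid_point K q) - grid_point K q j\<bar> \<le> (L * real s + 1) / real K"
    if j: "j \<in> {1..s}" for j
  proof -
    define i where "i = j - 1"
    have i: "i < s" "Suc i = j" using j unfolding i_def by auto
    obtain r t where r: "\<forall>j<s. q j \<le> r j \<and> r j \<le> q j + 1"
      and t: "\<forall>j<s. q j \<le> t j \<and> t j \<le> q j + 1" and differ: "?lab r i \<noteq> ?lab t i"
      using cell i(1) by blast
    have near: "\<bar>F j (grid_point K c) - F j (grid_point K q)\<bar> \<le> L * real s / real K"
      if "c \<in> {r, t}" for c
    proof -
      have "\<forall>j<s. q j \<le> c j \<and> c j \<le> q j + 1" using r t that by auto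
      then have "dist1 s (grid_point K c) (grid_point K q) \<le> real s / real K"
        by (rule grid_point_cell_dist)
      then have "L * dist1 s (grid_point K c) (grid_point K q) \<le> L * (real s / real K)"
        using assms(5) by (rule mult_left_mono)
      then show ?thesis using lip[OF j, of "grid_point K c" "grid_point K q"] by simp
    qed
    obtain a b where ab: "a \<in> {r, t}" "b \<in> {r, t}"
      and lo: "real (q i) \<le> real K * F j (grid_point K a)"
      and hi: "real K * F j (grid_point K b) \<le> real (q i + 1)"
      using fixpoint_label_bracket[OF r t differ i(1)] range[OF j] i(2) by blast
    have ptq: "grid_point K q j = real (q i) / real K" unfolding grid_point_def i_def by simp
    have "grid_point K q j \<le> F j (grid_point K a)"
      using lo assms(1) unfolding ptq by (simp add: divide_le_eq mult.commute)
    moreover have "F j (grid_point K b) \<le> grid_point K q j + 1 / real K"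
      using hi assms(1) unfolding ptq by (simp add: field_simps)
    moreover have "(L * real s + 1) / real K = L * real s / real K + 1 / real K"
      by (rule add_divide_distrib)
    moreover have "0 < 1 / real K" using assms(1) by simp
    ultimately show ?thesis using near[OF ab(1)] near[OF ab(2)]
      unfolding abs_le_iff by linarith
  qed
  then show ?thesis by blast
qed

text \<open>Hence a Lipschitz self-map of a box [0,B]^s has epsilon-approximate fixed points for
  every epsilon > 0: take the mesh so fine that (L s + 1) / K \<le> epsilon.\<close>
lemma lipschitz_approx_fixpoint:
  fixes F :: "nat \<Rightarrow> (nat \<Rightarrow> real) \<Rightarrow> real"
  assumes range: "\<And>j y. j \<in> {1..s} \<Longrightarrow> 0 \<le> F j y \<and> F j y \<le> B"
    and lip: "\<And>j y y'. j \<in> {1..s} \<Longrightarrow> \<bar>F j y - F j y'\<bar> \<le> L * dist1 s y y'"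
    and "0 \<le> L" "0 < \<epsilon>"
  shows "\<exists>x. \<forall>j\<in>{1..s}. \<bar>F j x - x j\<bar> \<le> \<epsilon>"
proof -
  obtain K :: nat where K: "(L * real s + 1) / \<epsilon> < real K" using reals_Archimedean2 by blast
  have "0 \<le> L * real s" using assms(3) by simp
  then have "0 < (L * real s + 1) / \<epsilon>" using assms(4) by simp
  then have Kpos: "0 < K" using K by linarith
  have "L * real s + 1 < real K * \<epsilon>" using K assms(4) by (simp add: pos_divide_less_eq)
  moreover have "(L * real s + 1) / real K \<le> \<epsilon> \<longleftrightarrow> L * real s + 1 \<le> \<epsilon> * real K"
    using Kpos by (intro pos_divide_le_eq) simp
  ultimately have mesh: "(L * real s + 1) / real K \<le> \<epsilon>" by (simp add: mult.commute)
  obtain M :: nat where M: "B \<le> real M" using real_arch_simple by blast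
  have cover: "real K * F j y \<le> real (K * (M + 1))" if "j \<in> {1..s}" for j y
  proof -
    have "F j y \<le> real (M + 1)" using range[OF that, of y] M by simp
    then have "real K * F j y \<le> real K * real (M + 1)" by (rule mult_left_mono) simp
    then show ?thesis by (simp only: of_nat_mult)
  qed
  have "\<exists>q. \<forall>j\<in>{1..s}. \<bar>F j (grid_point K q) - grid_point K q j\<bar>
      \<le> (L * real s + 1) / real K"
    by (rule grid_approx_fixpoint[where P = "K * (M + 1)", OF Kpos _ _ lip assms(3)])
      (use Kpos range cover in auto)
  then obtain q where "\<forall>j\<in>{1..s}. \<bar>F j (grid_point K q) - grid_point K q j\<bar>
      \<le> (L * real s + 1) / real K" by (elim exE)
  then show ?thesis using mesh by (intro exI[of _ "grid_point K q"]) fastforce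
qed

text \<open>The Hall condition holds since T carries total mass card T, all of it on the
  strategies covered by the supports of T.\<close>
lemma fractional_rounding:
  fixes \<sigma> :: "'a \<Rightarrow> 'b \<Rightarrow> real"
  assumes fin: "finite N" "finite J"
    and nonneg: "\<And>p j. p \<in> N \<Longrightarrow> j \<in> J \<Longrightarrow> 0 \<le> \<sigma> p j"
    and total: "\<And>p. p \<in> N \<Longrightarrow> (\<Sum>j\<in>J. \<sigma> p j) = 1"
  shows "\<exists>S. (\<forall>p\<in>N. S p \<in> J \<and> 0 < \<sigma> p (S p)) \<and>
             (\<forall>j. card {p\<in>N. S p = j} \<le> nat \<lceil>\<Sum>p\<in>N. \<sigma> p j\<rceil>)"
proof -
  define A where "A p = {j\<in>J. 0 < \<sigma> p j}" for p
  define c where "c j = nat \<lceil>\<Sum>p\<in>N. \<sigma> p j\<rceil>" for j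
  have hall: "hall_cond N A c"
    unfolding hall_cond_def
  proof (intro allI impI)
    fix T assume T: "T \<subseteq> N"
    define U where "U = \<Union>(A ` T)"
    have U: "U \<subseteq> J" unfolding U_def A_def by auto
    have "real (card T) = (\<Sum>p\<in>T. \<Sum>j\<in>J. \<sigma> p j)" using T total by (simp add: subset_iff)
    also have "\<dots> = (\<Sum>p\<in>T. \<Sum>j\<in>U. \<sigma> p j)"
    proof (rule sum.cong[OF refl], rule sum.mono_neutral_right[OF fin(2) U], rule ballI)
      fix p j assume p: "p \<in> T" and j: "j \<in> J - U"
      then have "\<not> 0 < \<sigma> p j" unfolding U_def A_def by auto
      then show "\<sigma> p j = 0" using nonneg[of p j] p j T by auto
    qed
    also have "\<dots> = (\<Sum>j\<in>U. \<Sum>p\<in>T. \<sigma> p j)" by (rule sum.swap)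
    also have "\<dots> \<le> (\<Sum>j\<in>U. \<Sum>p\<in>N. \<sigma> p j)"
      using T U fin(1) nonneg by (intro sum_mono sum_mono2) auto
    also have "\<dots> \<le> (\<Sum>j\<in>U. real (c j))"
      unfolding c_def by (intro sum_mono real_nat_ceiling_ge)
    finally show "card T \<le> sum c U" by (simp only: of_nat_sum[symmetric] of_nat_le_iff)
  qed
  have finA: "\<forall>p\<in>N. finite (A p)" using fin(2) unfolding A_def by simp
  obtain S where "\<forall>p\<in>N. S p \<in> A p" "\<forall>j. card {p\<in>N. S p = j} \<le> c j"
    using hall_capacity[OF fin(1) finA hall] by (elim exE conjE)
  then show ?thesis unfolding A_def c_def by (intro exI[of _ S]) simp
qed

lemma dist1_balanced:
  assumes "\<And>j. j \<in> {1..s} \<Longrightarrow> a j \<le> b j + 1" "(\<Sum>j=1..s. a j) = (\<Sum>j=1..s. b j)"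
  shows "dist1 s a b \<le> 2 * real s"
proof -
  have "dist1 s a b = (\<Sum>j=1..s. 2 * max 0 (a j - b j) - (a j - b j))"
    unfolding dist1_def by (rule sum.cong) (auto simp: max_def)
  also have "\<dots> = (\<Sum>j=1..s. 2 * max 0 (a j - b j))"
    using assms(2) by (simp add: sum_subtractf)
  also have "\<dots> \<le> (\<Sum>j=1..s. 2)"
  proof (rule sum_mono)
    fix j assume "j \<in> {1..s}"
    then show "2 * max 0 (a j - b j) \<le> 2" using assms(1)[of j] by simp
  qed
  finally show ?thesis by simp
qed

definition strategy_count :: "nat \<Rightarrow> (nat \<Rightarrow> nat) \<Rightarrow> nat \<Rightarrow> nat" where
  "strategy_count n S j = card {p\<in>{1..n}. S p = j}"

lemma strategy_count_sum:
  assumes "pure_profile n s S"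
  shows "(\<Sum>j=1..s. strategy_count n S j) = n"
proof -
  have partition: "{1..n} = (\<Union>j\<in>{1..s}. {p\<in>{1..n}. S p = j})"
    using assms unfolding pure_profile_def by auto
  have "n = card {1..n}" by simp
  also have "\<dots> = card (\<Union>j\<in>{1..s}. {p\<in>{1..n}. S p = j})"
    by (rule arg_cong) (rule partition)
  also have "\<dots> = (\<Sum>j=1..s. card {p\<in>{1..n}. S p = j})"
    by (rule card_UN_disjoint) auto
  finally show ?thesis unfolding strategy_count_def by simp
qed

lemma others_count_eq:
  assumes "p \<in> {1..n}" "j \<in> {1..s}"
  shows "real (others_count n s S p j) = real (strategy_count n S j) - (if j = S p then 1 else 0)"
proof -
  define C where "C = {q\<in>{1..n}. S q = j}"
  have "{q \<in> {1..n} - {p}. S q = j} = C - {p}" unfolding C_def by auto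
  then have oc: "others_count n s S p j = card (C - {p})"
    unfolding others_count_def using assms(2) by simp
  show ?thesis
  proof (cases "j = S p")
    case True
    then have "p \<in> C" using assms(1) unfolding C_def by simp
    then have "card (C - {p}) + 1 = card C" using card_Suc_Diff1[of C p] unfolding C_def by simp
    then have "real (card (C - {p})) + 1 = real (card C)" by (metis of_nat_1 of_nat_add)
    then show ?thesis using True oc unfolding strategy_count_def C_def by simp
  next
    case False
    then have "C - {p} = C" unfolding C_def by auto
    then show ?thesis using False oc unfolding strategy_count_def C_def by simp
  qed
qed

lemma others_count_dist:
  assumes "pure_profile n s S" "p \<in> {1..n}"
  shows "dist1 s (real \<circ> others_count n s S p) (real \<circ> strategy_count n S) = 1"
proof -
  have "S p \<in> {1..s}" using assms unfolding pure_profile_def by blast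
  have "dist1 s (real \<circ> others_count n s S p) (real \<circ> strategy_count n S)
        = (\<Sum>j=1..s. if j = S p then 1 else 0)"
    unfolding dist1_def by (rule sum.cong) (simp_all add: others_count_eq[OF assms(2)])
  also have "\<dots> = 1" using \<open>S p \<in> {1..s}\<close> by simp
  finally show ?thesis .
qed

lemma others_count_Pi_set:
  assumes "pure_profile n s S" "p \<in> {1..n}"
  shows "others_count n s S p \<in> Pi_set s (n - 1)"
proof -
  have Sp: "S p \<in> {1..s}" using assms unfolding pure_profile_def by blast
  have "real (\<Sum>j=1..s. others_count n s S p j)
        = (\<Sum>j=1..s. real (strategy_count n S j)) - (\<Sum>j=1..s. if j = S p then 1 else 0)"
    using assms(2) by (simp add: others_count_eq sum_subtractf)
  also have "\<dots> = real (n - 1)"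
    using strategy_count_sum[OF assms(1)] Sp assms(2) by (simp add: of_nat_diff flip: of_nat_sum)
  finally have "(\<Sum>j=1..s. others_count n s S p j) = n - 1" by (simp only: of_nat_eq_iff)
  then show ?thesis unfolding Pi_set_def others_count_def by auto
qed

lemma approx_pure_NE_mono:
  "approx_pure_NE n s u \<epsilon> S \<Longrightarrow> \<epsilon> \<le> \<epsilon>' \<Longrightarrow> approx_pure_NE n s u \<epsilon>' S"
  unfolding approx_pure_NE_def by force

locale lipschitz_anonymous_game =
  fixes n s :: nat and u :: "nat \<Rightarrow> nat \<Rightarrow> (nat \<Rightarrow> nat) \<Rightarrow> real" and lam :: real
  assumes strategies: "1 \<le> s" and lam_pos: "0 < lam"
    and bounded: "anonymous_game n s u" and lipschitz: "lipschitz_game n s u lam"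
begin

definition ext_util :: "nat \<Rightarrow> nat \<Rightarrow> (nat \<Rightarrow> real) \<Rightarrow> real" where
  "ext_util p i = lip_ext lam s (Pi_set s (n - 1)) (u p i)"

definition response :: "nat \<Rightarrow> (nat \<Rightarrow> real) \<Rightarrow> nat \<Rightarrow> real" where
  "response p y = soft_br s lam (\<lambda>i. ext_util p i y)"

definition load :: "nat \<Rightarrow> (nat \<Rightarrow> real) \<Rightarrow> real" where
  "load j y = (\<Sum>p=1..n. response p y j)"

lemma Pi_set_nonempty: "Pi_set s m \<noteq> {}"
proof -
  have "(\<lambda>i. if i = 1 then m else 0) \<in> Pi_set s m"
    using strategies unfolding Pi_set_def by (simp add: sum.delta)
  then show ?thesis by blast
qed

lemma utility_bdd_below:
  assumes "p \<in> {1..n}" "i \<in> {1..s}"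
  shows "bdd_below (u p i ` Pi_set s (n - 1))"
  using bounded assms unfolding anonymous_game_def by (intro bdd_belowI2[of _ 0]) blast

lemma ext_util_lipschitz:
  assumes "p \<in> {1..n}" "i \<in> {1..s}"
  shows "\<bar>ext_util p i y - ext_util p i y'\<bar> \<le> lam * dist1 s y y'"
  unfolding ext_util_def
  using lip_ext_lipschitz[OF Pi_set_nonempty utility_bdd_below[OF assms]] lam_pos by simp

lemma ext_util_extends:
  assumes "p \<in> {1..n}" "i \<in> {1..s}" "x \<in> Pi_set s (n - 1)"
  shows "ext_util p i (real \<circ> x) = u p i x"
  unfolding ext_util_def
proof (rule lip_ext_extends[OF utility_bdd_below[OF assms(1,2)] _ assms(3)])
  show "0 \<le> lam" using lam_pos by simp
  show "\<bar>u p i x - u p i x'\<bar> \<le> lam * l1_dist s x x'" if "x' \<in> Pi_set s (n - 1)" for x'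
    using lipschitz assms that unfolding lipschitz_game_def by blast
qed

lemma response_lipschitz:
  assumes "p \<in> {1..n}" "j \<in> {1..s}"
  shows "\<bar>response p y j - response p y' j\<bar> \<le> 2 * (real s + 1) * dist1 s y y'"
proof -
  have "\<bar>response p y j - response p y' j\<bar> \<le> 2 * (real s + 1) * (lam * dist1 s y y') / lam"
    unfolding response_def
    by (rule soft_br_lipschitz[OF strategies lam_pos ext_util_lipschitz[OF assms(1)] assms(2)])
  then show ?thesis using lam_pos by simp
qed

lemma load_sum: "(\<Sum>j=1..s. load j y) = real n"
proof -
  have "(\<Sum>j=1..s. load j y) = (\<Sum>p=1..n. \<Sum>j=1..s. response p y j)"
    unfolding load_def by (rule sum.swap)
  also have "\<dots> = (\<Sum>p=1..n. 1)"
    unfolding response_def by (intro sum.cong refl soft_br_sum[OF strategies lam_pos])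
  finally show ?thesis by simp
qed

lemma load_range:
  assumes "j \<in> {1..s}"
  shows "0 \<le> load j y \<and> load j y \<le> real n"
proof
  show "0 \<le> load j y" unfolding load_def response_def by (simp add: sum_nonneg soft_br_nonneg)
  have "load j y \<le> (\<Sum>k=1..s. load k y)"
    using assms by (intro member_le_sum) (simp_all add: load_def response_def sum_nonneg soft_br_nonneg)
  then show "load j y \<le> real n" using load_sum[of y] by linarith
qed

lemma load_lipschitz:
  assumes "j \<in> {1..s}"
  shows "\<bar>load j y - load j y'\<bar> \<le> (2 * real n * (real s + 1)) * dist1 s y y'"
proof -
  have "\<bar>load j y - load j y'\<bar> \<le> (\<Sum>p=1..n. \<bar>response p y j - response p y' j\<bar>)"
    unfolding load_def sum_subtractf[symmetric] by (rule sum_abs)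
  also have "\<dots> \<le> (\<Sum>p=1..n. 2 * (real s + 1) * dist1 s y y')"
    using response_lipschitz assms by (intro sum_mono) simp
  finally show ?thesis by (simp add: algebra_simps)
qed

lemma load_approx_fixpoint: "\<exists>x. \<forall>j\<in>{1..s}. \<bar>load j x - x j\<bar> \<le> 1"
  by (rule lipschitz_approx_fixpoint[OF load_range load_lipschitz]) simp_all

lemma rounded_profile:
  assumes fp: "\<forall>j\<in>{1..s}. \<bar>load j x - x j\<bar> \<le> 1"
  shows "\<exists>S. pure_profile n s S \<and> (\<forall>p\<in>{1..n}. 0 < response p x (S p)) \<and>
             dist1 s (real \<circ> strategy_count n S) x \<le> 3 * real s"
proof -
  have "\<exists>S. (\<forall>p\<in>{1..n}. S p \<in> {1..s} \<and> 0 < response p x (S p)) \<and>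
      (\<forall>j. card {p\<in>{1..n}. S p = j} \<le> nat \<lceil>\<Sum>p\<in>{1..n}. response p x j\<rceil>)"
  proof (rule fractional_rounding)
    show "(\<Sum>j\<in>{1..s}. response p x j) = 1" for p
      unfolding response_def by (rule soft_br_sum[OF strategies lam_pos])
  qed (simp_all add: response_def soft_br_nonneg)
  then obtain S where S: "\<forall>p\<in>{1..n}. S p \<in> {1..s} \<and> 0 < response p x (S p)"
    and count: "\<forall>j. strategy_count n S j \<le> nat \<lceil>load j x\<rceil>"
    unfolding strategy_count_def load_def by (elim exE conjE)
  have profile: "pure_profile n s S" using S unfolding pure_profile_def by blast
  have "real (strategy_count n S j) \<le> load j x + 1" for j
  proof -
    have "real (strategy_count n S j) \<le> real (nat \<lceil>load j x\<rceil>)" using count by simp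
    also have "\<dots> \<le> load j x + 1"
      using load_range[of j] of_int_ceiling_le_add_one[of "load j x"]
      by (cases "j \<in> {1..s}") (auto simp: load_def response_def sum_nonneg soft_br_nonneg)
    finally show ?thesis .
  qed
  then have "dist1 s (real \<circ> strategy_count n S) (\<lambda>j. load j x) \<le> 2 * real s"
    using strategy_count_sum[OF profile] load_sum
    by (intro dist1_balanced) (simp_all flip: of_nat_sum)
  moreover have "dist1 s (\<lambda>j. load j x) x \<le> real s * 1"
    using fp by (intro dist1_pointwise) auto
  ultimately have close: "dist1 s (real \<circ> strategy_count n S) x \<le> 3 * real s"
    using dist1_triangle[of s "real \<circ> strategy_count n S" x "\<lambda>j. load j x"] by simp
  show ?thesis using profile S close by (intro exI[of _ S] conjI) auto
qed

text \<open>Such a profile is a (6 s + 3) lam-approximate equilibrium: the counts each player faces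
  are within 3 s + 1 of x, so each extended utility changes by at most lam (3 s + 1).\<close>
lemma approx_NE:
  assumes profile: "pure_profile n s S" and support: "\<forall>p\<in>{1..n}. 0 < response p x (S p)"
    and close: "dist1 s (real \<circ> strategy_count n S) x \<le> 3 * real s"
  shows "approx_pure_NE n s u ((6 * real s + 3) * lam) S"
  unfolding approx_pure_NE_def
proof (intro conjI profile ballI)
  fix p i assume p: "p \<in> {1..n}" and i: "i \<in> {1..s}"
  let ?o = "others_count n s S p"
  have Sp: "S p \<in> {1..s}" using profile p unfolding pure_profile_def by blast
  have o_Pi: "?o \<in> Pi_set s (n - 1)" by (rule others_count_Pi_set[OF profile p])
  have "dist1 s (real \<circ> ?o) x \<le> 3 * real s + 1"
    using dist1_triangle[of s "real \<circ> ?o" x "real \<circ> strategy_count n S"]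
      others_count_dist[OF profile p] close by simp
  then have "lam * dist1 s (real \<circ> ?o) x \<le> lam * (3 * real s + 1)"
    using lam_pos by (intro mult_left_mono) simp_all
  then have transfer: "\<bar>ext_util p k (real \<circ> ?o) - ext_util p k x\<bar> \<le> lam * (3 * real s + 1)"
    if "k \<in> {1..s}" for k
    using ext_util_lipschitz[OF p that, of "real \<circ> ?o" x] by linarith
  have "ext_util p i x < ext_util p (S p) x + lam"
    using soft_br_near_best support p i unfolding response_def by blast
  moreover have "(6 * real s + 3) * lam = 2 * (lam * (3 * real s + 1)) + lam"
    by (simp add: algebra_simps)
  ultimately show "u p i ?o \<le> u p (S p) ?o + (6 * real s + 3) * lam"
    using transfer[OF i] transfer[OF Sp] ext_util_extends[OF p i o_Pi]
      ext_util_extends[OF p Sp o_Pi] unfolding abs_le_iff by linarith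
qed

theorem exists_approx_pure_NE: "\<exists>S. approx_pure_NE n s u ((6 * real s + 3) * lam) S"
proof -
  obtain x where fp: "\<forall>j\<in>{1..s}. \<bar>load j x - x j\<bar> \<le> 1"
    using load_approx_fixpoint by (elim exE)
  obtain S where "pure_profile n s S" "\<forall>p\<in>{1..n}. 0 < response p x (S p)"
    "dist1 s (real \<circ> strategy_count n S) x \<le> 3 * real s"
    using rounded_profile[OF fp] by (elim exE conjE)
  then show ?thesis by (intro exI[of _ S] approx_NE)
qed

end

text \<open>The main theorem, with C = 9, since 6 s + 3 \<le> 9 s^2 for s \<ge> 1.\<close>
theorem theorem1:
  shows "\<exists>C::real. C > 0 \<and>
    (\<forall>(n::nat) (s::nat) (u :: nat \<Rightarrow> nat \<Rightarrow> (nat \<Rightarrow> nat) \<Rightarrow> real) (lambda::real).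
       n \<ge> 2 \<longrightarrow> s \<ge> 2 \<longrightarrow> lambda > 0 \<longrightarrow> anonymous_game n s u \<longrightarrow> lipschitz_game n s u lambda \<longrightarrow>
       (\<exists>S. approx_pure_NE n s u (C * real s ^ 2 * lambda) S))"
proof (intro exI[of _ 9] conjI allI impI)
  fix n s :: nat and u :: "nat \<Rightarrow> nat \<Rightarrow> (nat \<Rightarrow> nat) \<Rightarrow> real" and lambda :: real
  assume "n \<ge> 2" "s \<ge> 2" "lambda > 0" "anonymous_game n s u" "lipschitz_game n s u lambda"
  then interpret lipschitz_anonymous_game n s u lambda by unfold_locales simp_all
  obtain S where S: "approx_pure_NE n s u ((6 * real s + 3) * lambda) S"
    using exists_approx_pure_NE by (elim exE)
  have s1: "1 \<le> real s" using \<open>s \<ge> 2\<close> by simp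
  then have "real s * 1 \<le> real s * real s" by (intro mult_left_mono) simp_all
  then have "6 * real s + 3 \<le> 9 * real s ^ 2" unfolding power2_eq_square using s1 by linarith
  then have "(6 * real s + 3) * lambda \<le> 9 * real s ^ 2 * lambda"
    using \<open>lambda > 0\<close> by (simp add: mult_right_mono)
  then show "\<exists>S. approx_pure_NE n s u (9 * real s ^ 2 * lambda) S"
    by (intro exI[of _ S]) (rule approx_pure_NE_mono[OF S])
qed simp

end
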